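(* There exists $p\in\mathcal{P}$ such that $\mathrm{Stab}_{G^*}(p)=\langle\varphi\rangle$ for some $2n$-cycle $\varphi\in\mathrm{Sym}(I)$.
   Context: Fix $n\ge 2$, $W=\{1,\dots,n\}$, $M=\{n+1,\dots,2n\}$, $I=W\cup M$. Permutations compose right-to-left. A preference profile is a function $p$ on $I$ assigning to each $x\in W$ a linear order $p(x)$ on $M$ and to each $y\in M$ a linear order $p(y)$ on $W$; $\mathcal{P}$ is the set of preference profiles. $G^*=\{\varphi\in\mathrm{Sym}(I):\{\varphi(W),\varphi(M)\}=\{W,M\}\}$. For a linear order $R$ on $X\subseteq I$ and $\varphi\in\mathrm{Sym}(I)$, $\varphi R$ is the relation on $\varphi(X)$ with $(a,b)\in\varphi R$ iff $(\varphi^{-1}(a),\varphi^{-1}(b))\in R$. For $\varphi\in G^*$, $p^\varphi(z)=\varphi\,p(\varphi^{-1}(z))$, and $\mathrm{Stab}_{G^*}(p)=\{\varphi\in G^*:p^\varphi=p\}$. *)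

theory Defs
  imports Main "HOL-Combinatorics.Combinatorics"
begin

definition Wset :: "nat \<Rightarrow> nat set" where "Wset n = {1..n}"
definition Mset :: "nat \<Rightarrow> nat set" where "Mset n = {n+1..2*n}"
definition Iset :: "nat \<Rightarrow> nat set" where "Iset n = Wset n \<union> Mset n"

text \<open>Preference profiles. Outside I the value is fixed to the empty relation,
  so that profiles are determined by their values on I.\<close>
definition profiles :: "nat \<Rightarrow> (nat \<Rightarrow> nat rel) set" where
  "profiles n = {p. (\<forall>x\<in>Wset n. linear_order_on (Mset n) (p x))
                  \<and> (\<forall>y\<in>Mset n. linear_order_on (Wset n) (p y))
                  \<and> (\<forall>z. z \<notin> Iset n \<longrightarrow> p z = {})}"

definition Gstar :: "nat \<Rightarrow> (nat \<Rightarrow> nat) set" where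
  "Gstar n = {\<phi>. \<phi> permutes Iset n \<and> {\<phi> ` Wset n, \<phi> ` Mset n} = {Wset n, Mset n}}"

definition act_rel :: "(nat \<Rightarrow> nat) \<Rightarrow> nat rel \<Rightarrow> nat rel" where
  "act_rel \<phi> R = {(a, b). (inv \<phi> a, inv \<phi> b) \<in> R}"

definition act_profile :: "(nat \<Rightarrow> nat) \<Rightarrow> (nat \<Rightarrow> nat rel) \<Rightarrow> (nat \<Rightarrow> nat rel)" where
  "act_profile \<phi> p = (\<lambda>z. act_rel \<phi> (p (inv \<phi> z)))"

definition Stab :: "nat \<Rightarrow> (nat \<Rightarrow> nat rel) \<Rightarrow> (nat \<Rightarrow> nat) set" where
  "Stab n p = {\<phi> \<in> Gstar n. act_profile \<phi> p = p}"

definition gen_cyclic :: "(nat \<Rightarrow> nat) \<Rightarrow> (nat \<Rightarrow> nat) set" where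
  "gen_cyclic \<phi> = range (\<lambda>k. \<phi> ^^ k)"

definition is_full_cycle :: "nat \<Rightarrow> (nat \<Rightarrow> nat) \<Rightarrow> bool" where
  "is_full_cycle n \<phi> \<longleftrightarrow> (\<exists>cs. distinct cs \<and> length cs = 2 * n \<and> set cs = Iset n
                              \<and> \<phi> = cycle_of_list cs)"

end

theory Submission
  imports Defs
begin

text \<open>Arrange \<open>I\<close> on the cycle \<open>1, n+1, 2, n+2, \<dots>, n, 2n\<close>, which alternates between the
  two sides, and let \<open>\<phi>\<close> be the rotation along it. Let every agent rank the other side by how
  soon its members follow it on the cycle. This profile is visibly \<open>\<phi>\<close>-invariant. Conversely,
  the favourite of each agent \<open>z\<close> is \<open>\<phi> z\<close>, so a permutation \<open>\<psi>\<close> that stabilises the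
  profile maps the favourite of \<open>z\<close> to that of \<open>\<psi> z\<close>, i.e. it commutes with \<open>\<phi>\<close>; and the
  only permutations commuting with a full cycle are its powers.\<close>

section \<open>Rank orders\<close>

definition rank_order :: "'a set \<Rightarrow> ('a \<Rightarrow> 'b::linorder) \<Rightarrow> 'a rel" where
  "rank_order A f = {(a, b). a \<in> A \<and> b \<in> A \<and> f a \<le> f b}"

definition least_elements :: "'a rel \<Rightarrow> 'a set" where
  "least_elements R = {a \<in> Field R. \<forall>b \<in> Field R. (a, b) \<in> R}"

lemma linear_order_on_rank_order:
  assumes "inj_on f A"
  shows "linear_order_on A (rank_order A f)"
  unfolding linear_order_on_def partial_order_on_def preorder_on_def
proof (intro conjI)
  show "rank_order A f \<subseteq> A \<times> A" "refl_on A (rank_order A f)" "total_on A (rank_order A f)"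
    by (auto simp: refl_on_def total_on_def rank_order_def)
  show "trans (rank_order A f)"
    unfolding trans_def rank_order_def by auto
  show "antisym (rank_order A f)"
    using assms unfolding antisym_def rank_order_def inj_on_def by auto
qed

lemma Field_rank_order: "Field (rank_order A f) = A"
  by (auto simp: Field_def rank_order_def)

lemma least_elements_rank_order:
  "least_elements (rank_order A f) = {a \<in> A. \<forall>b \<in> A. f a \<le> f b}"
  by (auto simp: least_elements_def Field_rank_order) (auto simp: rank_order_def)

lemma act_rel_rank_order:
  assumes "bij \<phi>"
  shows "act_rel \<phi> (rank_order A f) = rank_order (\<phi> ` A) (f \<circ> inv \<phi>)"
proof -
  have "\<phi> ` A = {a. inv \<phi> a \<in> A}"
    using bij_image_Collect_eq[OF assms, of "\<lambda>x. x \<in> A"] by simp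
  then show ?thesis by (auto simp: act_rel_def rank_order_def)
qed

lemma Field_act_rel:
  assumes "bij \<phi>"
  shows "Field (act_rel \<phi> R) = \<phi> ` Field R"
proof -
  have "\<phi> ` Field R = {a. inv \<phi> a \<in> Field R}"
    using bij_image_Collect_eq[OF assms, of "\<lambda>x. x \<in> Field R"] by simp
  also have "\<dots> = Field (act_rel \<phi> R)"
    using assms by (auto simp: act_rel_def Field_def) (metis bij_inv_eq_iff)+
  finally show ?thesis by simp
qed

lemma least_elements_act_rel:
  assumes "bij \<phi>"
  shows "least_elements (act_rel \<phi> R) = \<phi> ` least_elements R"
  using assms unfolding least_elements_def Field_act_rel[OF assms]
  by (auto simp: act_rel_def bij_is_inj)

section \<open>Orbits and cycles\<close>

lemma funpow_dist_apply:
  assumes "inj f"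
  shows "funpow_dist f (f x) (f y) = funpow_dist f x y"
proof -
  have "(f ^^ k) (f x) = f y \<longleftrightarrow> (f ^^ k) x = y" for k
    using assms by (simp add: inj_eq flip: funpow_swap1)
  then show ?thesis by (simp add: funpow_dist_def)
qed

lemma inj_on_funpow_dist: "inj_on (funpow_dist f x) (orbit f x)"
  by (metis funpow_dist_prop inj_onI)

lemma funpow_cycle_of_list_nth:
  assumes "distinct cs" "j < length cs"
  shows "(cycle_of_list cs ^^ k) (cs ! j) = cs ! ((k + j) mod length cs)"
proof -
  have "(cycle_of_list cs ^^ k) (cs ! j) = rotate k cs ! j"
    using cyclic_rotation[OF assms(1), of k] assms(2) by (metis nth_map)
  then show ?thesis
    using assms(2) by (simp add: nth_rotate)
qed

lemma cyclic_on_cycle_of_list: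
  assumes "distinct cs" "cs \<noteq> []"
  shows "cyclic_on (cycle_of_list cs) (set cs)"
proof (rule cyclic_on_singleI)
  show first: "cs ! 0 \<in> set cs"
    using assms(2) by simp
  show "set cs = orbit (cycle_of_list cs) (cs ! 0)"
  proof
    show "orbit (cycle_of_list cs) (cs ! 0) \<subseteq> set cs"
      using permutes_orbit_subset[OF cycle_permutes first] .
    show "set cs \<subseteq> orbit (cycle_of_list cs) (cs ! 0)"
    proof
      fix y assume "y \<in> set cs"
      then obtain j where j: "j < length cs" "y = cs ! j"
        by (auto simp: in_set_conv_nth)
      then have "(cycle_of_list cs ^^ (length cs + j)) (cs ! 0) = y"
        using assms by (simp add: funpow_cycle_of_list_nth)
      then show "y \<in> orbit (cycle_of_list cs) (cs ! 0)"
        using assms(2) by (auto simp: orbit_altdef)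
    qed
  qed
qed

lemma commute_cyclic_on_imp_funpow:
  assumes "cyclic_on f S" "f permutes S" "c permutes S" "c \<circ> f = f \<circ> c"
  shows "\<exists>k. c = f ^^ k"
proof -
  obtain s where s: "s \<in> S" "S = orbit f s"
    using assms(1) by (auto simp: cyclic_on_def)
  have commute: "c ((f ^^ m) x) = (f ^^ m) (c x)" for m x
    using assms(4) by (induction m) (simp_all add: fun_eq_iff)
  obtain k where k: "c s = (f ^^ k) s"
    using s permutes_in_image[OF assms(3)] by (fastforce simp: orbit_altdef)
  have "c x = (f ^^ k) x" for x
  proof (cases "x \<in> S")
    case True
    then obtain m where "x = (f ^^ m) s"
      using s by (auto simp: orbit_altdef)
    then show ?thesis
      using commute k by (metis add.commute comp_apply funpow_add)
  next
    case False
    then show ?thesis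
      using permutes_not_in[OF assms(3)] permutes_not_in[OF permutes_funpow[OF assms(2)]] by simp
  qed
  then show ?thesis by blast
qed

lemma permutes_image_eqI:
  assumes "\<phi> permutes S" "A \<subseteq> S" "B \<subseteq> S" "\<And>x. x \<in> S \<Longrightarrow> \<phi> x \<in> B \<longleftrightarrow> x \<in> A"
  shows "\<phi> ` A = B"
proof
  show "\<phi> ` A \<subseteq> B"
    using assms(2,4) by auto
  show "B \<subseteq> \<phi> ` A"
  proof
    fix b assume b: "b \<in> B"
    then obtain x where "x \<in> S" "b = \<phi> x"
      using assms(3) permutes_image[OF assms(1)] by blast
    then show "b \<in> \<phi> ` A"
      using b assms(4) by blast
  qed
qed

section \<open>The stabiliser is a group\<close>

lemma act_rel_comp: "bij f \<Longrightarrow> bij g \<Longrightarrow> act_rel (f \<circ> g) R = act_rel f (act_rel g R)"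
  unfolding act_rel_def by (simp add: o_inv_distrib)

lemma act_profile_comp:
  "bij f \<Longrightarrow> bij g \<Longrightarrow> act_profile (f \<circ> g) p = act_profile f (act_profile g p)"
  unfolding act_profile_def by (simp add: act_rel_comp o_inv_distrib)

lemma act_profile_eq_iff:
  assumes "bij \<phi>"
  shows "act_profile \<phi> p = p \<longleftrightarrow> (\<forall>z. p (\<phi> z) = act_rel \<phi> (p z))"
  using assms unfolding act_profile_def fun_eq_iff by (metis bij_inv_eq_iff)

lemma Gstar_comp:
  assumes "f \<in> Gstar n" "g \<in> Gstar n"
  shows "f \<circ> g \<in> Gstar n"
proof -
  have "{(f \<circ> g) ` Wset n, (f \<circ> g) ` Mset n} = image f ` {g ` Wset n, g ` Mset n}"
    by (simp add: image_comp)
  also have "\<dots> = {Wset n, Mset n}"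
    using assms by (simp add: Gstar_def)
  finally show ?thesis
    using assms by (simp add: Gstar_def permutes_compose)
qed

lemma Stab_comp:
  assumes "f \<in> Stab n p" "g \<in> Stab n p"
  shows "f \<circ> g \<in> Stab n p"
proof -
  have "bij f" "bij g"
    using assms by (auto simp: Stab_def Gstar_def permutes_bij)
  then show ?thesis
    using assms by (simp add: Stab_def Gstar_comp act_profile_comp)
qed

lemma id_in_Stab: "id \<in> Stab n p"
  by (auto simp: Stab_def Gstar_def act_profile_def act_rel_def permutes_id)

lemma funpow_in_Stab: "\<phi> \<in> Stab n p \<Longrightarrow> \<phi> ^^ k \<in> Stab n p"
  by (induction k) (simp_all add: id_in_Stab Stab_comp)

section \<open>The alternating cycle and its profile\<close>

text \<open>The list \<open>[1, n+1, 2, n+2, \<dots>, n, 2n]\<close>.\<close>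
definition alternating_list :: "nat \<Rightarrow> nat list" where
  "alternating_list n = map (\<lambda>j. if even j then j div 2 + 1 else n + j div 2 + 1) [0..<2 * n]"

definition alternating_cycle :: "nat \<Rightarrow> nat \<Rightarrow> nat" where
  "alternating_cycle n = cycle_of_list (alternating_list n)"

lemma length_alternating_list [simp]: "length (alternating_list n) = 2 * n"
  by (simp add: alternating_list_def)

lemma nth_alternating_list_in_Wset_iff:
  "j < 2 * n \<Longrightarrow> alternating_list n ! j \<in> Wset n \<longleftrightarrow> even j"
  by (auto simp: alternating_list_def Wset_def)

lemma distinct_alternating_list: "distinct (alternating_list n)"
  unfolding alternating_list_def distinct_map
  by (auto simp: inj_on_def) (auto elim!: evenE oddE)

lemma set_alternating_list: "set (alternating_list n) = Iset n"
proof (rule card_subset_eq)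
  have I: "Iset n = {1..2 * n}"
    by (auto simp: Iset_def Wset_def Mset_def)
  then show "finite (Iset n)"
    by simp
  show "set (alternating_list n) \<subseteq> Iset n"
    unfolding I by (auto simp: alternating_list_def)
  show "card (set (alternating_list n)) = card (Iset n)"
    using I by (simp add: distinct_card distinct_alternating_list)
qed

lemma alternating_cycle_permutes: "alternating_cycle n permutes Iset n"
  using cycle_permutes by (metis alternating_cycle_def set_alternating_list)

lemma alternating_cycle_in_Wset_iff:
  assumes "x \<in> Iset n"
  shows "alternating_cycle n x \<in> Wset n \<longleftrightarrow> x \<notin> Wset n"
proof -
  obtain j where j: "j < 2 * n" "x = alternating_list n ! j"
    using assms by (metis set_alternating_list in_set_conv_nth length_alternating_list)
  have "alternating_cycle n x = alternating_list n ! ((1 + j) mod (2 * n))"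
    using funpow_cycle_of_list_nth[OF distinct_alternating_list, of j n 1] j
    by (simp add: alternating_cycle_def)
  moreover have "even ((1 + j) mod (2 * n)) \<longleftrightarrow> odd j"
    using dvd_mod_iff[of 2 "2 * n" "1 + j"] by simp
  ultimately show ?thesis
    using j by (simp add: nth_alternating_list_in_Wset_iff)
qed

lemma Mset_iff_notin_Wset: "z \<in> Iset n \<Longrightarrow> z \<in> Mset n \<longleftrightarrow> z \<notin> Wset n"
  by (auto simp: Iset_def Wset_def Mset_def)

lemma alternating_cycle_image_Wset: "alternating_cycle n ` Wset n = Mset n"
  and alternating_cycle_image_Mset: "alternating_cycle n ` Mset n = Wset n"
proof -
  let ?\<phi> = "alternating_cycle n"
  have in_I: "x \<in> Iset n \<Longrightarrow> ?\<phi> x \<in> Iset n" for x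
    using permutes_in_image[OF alternating_cycle_permutes] by simp
  have "?\<phi> x \<in> Mset n \<longleftrightarrow> x \<in> Wset n" "?\<phi> x \<in> Wset n \<longleftrightarrow> x \<in> Mset n"
    if "x \<in> Iset n" for x
    using that in_I Mset_iff_notin_Wset alternating_cycle_in_Wset_iff by simp_all
  moreover have "Wset n \<subseteq> Iset n" "Mset n \<subseteq> Iset n"
    by (simp_all add: Iset_def)
  ultimately show "?\<phi> ` Wset n = Mset n" "?\<phi> ` Mset n = Wset n"
    using permutes_image_eqI[OF alternating_cycle_permutes] by blast+
qed

lemma alternating_cycle_in_Gstar: "alternating_cycle n \<in> Gstar n"
  using alternating_cycle_permutes
  by (simp add: Gstar_def alternating_cycle_image_Wset alternating_cycle_image_Mset insert_commute)

lemma cyclic_on_alternating_cycle: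
  assumes "0 < n"
  shows "cyclic_on (alternating_cycle n) (Iset n)"
proof -
  have "alternating_list n \<noteq> []"
    using assms by (simp add: alternating_list_def)
  then show ?thesis
    using cyclic_on_cycle_of_list[OF distinct_alternating_list]
    by (simp add: alternating_cycle_def set_alternating_list)
qed

lemma orbit_alternating_cycle:
  assumes "z \<in> Iset n"
  shows "orbit (alternating_cycle n) z = Iset n"
proof -
  have "0 < n"
    using assms by (auto simp: Iset_def Wset_def Mset_def)
  then show ?thesis
    using assms cyclic_on_alternating_cycle by (simp add: cyclic_on_alldef)
qed

definition other_side :: "nat \<Rightarrow> nat \<Rightarrow> nat set" where
  "other_side n z = (if z \<in> Wset n then Mset n else if z \<in> Mset n then Wset n else {})"

definition cyclic_profile :: "nat \<Rightarrow> nat \<Rightarrow> nat rel" where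
  "cyclic_profile n z = rank_order (other_side n z) (funpow_dist (alternating_cycle n) z)"

lemma other_side_subset_orbit: "other_side n z \<subseteq> orbit (alternating_cycle n) z"
  using orbit_alternating_cycle by (auto simp: other_side_def Iset_def)

lemma self_notin_other_side: "z \<notin> other_side n z"
  by (auto simp: other_side_def Wset_def Mset_def)

lemma other_side_Wset: "z \<in> Wset n \<Longrightarrow> other_side n z = Mset n"
  by (simp add: other_side_def)

lemma other_side_Mset: "z \<in> Mset n \<Longrightarrow> other_side n z = Wset n"
  by (auto simp: other_side_def Wset_def Mset_def)

lemma image_other_side: "alternating_cycle n ` other_side n z = other_side n (alternating_cycle n z)"
proof -
  consider "z \<in> Wset n" | "z \<in> Mset n" | "z \<notin> Iset n"
    by (auto simp: Iset_def)
  then show ?thesis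
  proof cases
    case 1
    then have "alternating_cycle n z \<in> Mset n"
      using alternating_cycle_image_Wset by blast
    then show ?thesis
      using 1 by (simp add: other_side_Wset other_side_Mset alternating_cycle_image_Mset)
  next
    case 2
    then have "alternating_cycle n z \<in> Wset n"
      using alternating_cycle_image_Mset by blast
    then show ?thesis
      using 2 by (simp add: other_side_Wset other_side_Mset alternating_cycle_image_Wset)
  next
    case 3
    then show ?thesis
      using permutes_not_in[OF alternating_cycle_permutes] by (auto simp: other_side_def Iset_def)
  qed
qed

lemma alternating_cycle_in_other_side:
  assumes "z \<in> Iset n"
  shows "alternating_cycle n z \<in> other_side n z"
proof (cases "z \<in> Wset n")
  case True
  then show ?thesis
    using alternating_cycle_image_Wset other_side_Wset by blast
next
  case False
  then have "z \<in> Mset n"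
    using assms by (simp add: Iset_def)
  then show ?thesis
    using alternating_cycle_image_Mset other_side_Mset by blast
qed

lemma cyclic_profile_in_profiles: "cyclic_profile n \<in> profiles n"
  unfolding profiles_def
proof (intro CollectI conjI ballI allI impI)
  have lin: "linear_order_on (other_side n z) (cyclic_profile n z)" for z
    unfolding cyclic_profile_def
    by (rule linear_order_on_rank_order, rule inj_on_subset[OF inj_on_funpow_dist other_side_subset_orbit])
  show "linear_order_on (Mset n) (cyclic_profile n x)" if "x \<in> Wset n" for x
    using lin[of x] by (simp add: other_side_Wset[OF that])
  show "linear_order_on (Wset n) (cyclic_profile n y)" if "y \<in> Mset n" for y
    using lin[of y] by (simp add: other_side_Mset[OF that])
  show "cyclic_profile n z = {}" if "z \<notin> Iset n" for z
    using that by (simp add: cyclic_profile_def other_side_def rank_order_def Iset_def)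
qed

lemma cyclic_profile_alternating_cycle:
  "cyclic_profile n (alternating_cycle n z) = act_rel (alternating_cycle n) (cyclic_profile n z)"
proof -
  let ?\<phi> = "alternating_cycle n"
  have bij: "bij ?\<phi>"
    using alternating_cycle_permutes permutes_bij by blast
  have "funpow_dist ?\<phi> z (inv ?\<phi> a) = funpow_dist ?\<phi> (?\<phi> z) a" for a
    using funpow_dist_apply[OF bij_is_inj[OF bij], of z "inv ?\<phi> a"] bij
    by (simp add: bij_is_surj surj_f_inv_f)
  then show ?thesis
    by (simp add: cyclic_profile_def act_rel_rank_order[OF bij] image_other_side comp_def)
qed

lemma least_elements_cyclic_profile:
  assumes "z \<in> Iset n"
  shows "least_elements (cyclic_profile n z) = {alternating_cycle n z}"
proof -
  let ?\<phi> = "alternating_cycle n" and ?d = "funpow_dist (alternating_cycle n) z"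
  have \<phi>z: "?\<phi> z \<in> other_side n z"
    using alternating_cycle_in_other_side[OF assms] .
  then have "?d (?\<phi> z) = 1"
    using funpow_dist_step funpow_dist_0 self_notin_other_side other_side_subset_orbit
    by (metis One_nat_def subsetD)
  moreover have "?d b \<ge> 1" if "b \<in> other_side n z" for b
    using that funpow_dist_0_eq self_notin_other_side other_side_subset_orbit
    by (metis less_one not_less subsetD)
  ultimately have least: "?d (?\<phi> z) \<le> ?d b" if "b \<in> other_side n z" for b
    using that by simp
  have "b = ?\<phi> z" if "b \<in> other_side n z" "?d b \<le> ?d (?\<phi> z)" for b
    using inj_on_subset[OF inj_on_funpow_dist other_side_subset_orbit[of n z]] that \<phi>z
      least[OF that(1)]
    by (simp add: inj_on_eq_iff)
  with least show ?thesis
    using \<phi>z by (auto simp: cyclic_profile_def least_elements_rank_order)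
qed

lemma alternating_cycle_in_Stab: "alternating_cycle n \<in> Stab n (cyclic_profile n)"
proof -
  have "bij (alternating_cycle n)"
    using alternating_cycle_permutes permutes_bij by blast
  then show ?thesis
    using alternating_cycle_in_Gstar cyclic_profile_alternating_cycle
    by (simp add: Stab_def act_profile_eq_iff)
qed

lemma Stab_cyclic_profile_imp_commute:
  assumes "\<psi> \<in> Stab n (cyclic_profile n)"
  shows "\<psi> \<circ> alternating_cycle n = alternating_cycle n \<circ> \<psi>"
proof
  fix z
  let ?\<phi> = "alternating_cycle n"
  have perm: "\<psi> permutes Iset n" and bij: "bij \<psi>"
    using assms by (auto simp: Stab_def Gstar_def permutes_bij)
  show "(\<psi> \<circ> ?\<phi>) z = (?\<phi> \<circ> \<psi>) z"
  proof (cases "z \<in> Iset n")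
    case True
    have "{?\<phi> (\<psi> z)} = least_elements (cyclic_profile n (\<psi> z))"
      using least_elements_cyclic_profile permutes_in_image[OF perm] True by simp
    also have "\<dots> = least_elements (act_rel \<psi> (cyclic_profile n z))"
      using assms bij by (simp add: Stab_def act_profile_eq_iff)
    also have "\<dots> = {\<psi> (?\<phi> z)}"
      using least_elements_act_rel[OF bij] least_elements_cyclic_profile[OF True] by simp
    finally show ?thesis
      by simp
  next
    case False
    then show ?thesis
      using permutes_not_in[OF perm] permutes_not_in[OF alternating_cycle_permutes] by simp
  qed
qed

theorem proposition16:
  fixes n :: nat
  assumes "n \<ge> 2"
  shows "\<exists>p \<in> profiles n. \<exists>\<phi>. is_full_cycle n \<phi> \<and> Stab n p = gen_cyclic \<phi>"
proof -
  let ?\<phi> = "alternating_cycle n" and ?p = "cyclic_profile n"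
  have "is_full_cycle n ?\<phi>"
    unfolding is_full_cycle_def alternating_cycle_def
    using distinct_alternating_list set_alternating_list length_alternating_list by blast
  moreover have "gen_cyclic ?\<phi> \<subseteq> Stab n ?p"
    using alternating_cycle_in_Stab by (auto simp: gen_cyclic_def funpow_in_Stab)
  moreover have "Stab n ?p \<subseteq> gen_cyclic ?\<phi>"
  proof
    fix \<psi> assume \<psi>: "\<psi> \<in> Stab n ?p"
    have "0 < n" "\<psi> permutes Iset n"
      using assms \<psi> by (simp_all add: Stab_def Gstar_def)
    then obtain k where "\<psi> = ?\<phi> ^^ k"
      using commute_cyclic_on_imp_funpow[OF cyclic_on_alternating_cycle alternating_cycle_permutes]
        Stab_cyclic_profile_imp_commute[OF \<psi>] by blast
    then show "\<psi> \<in> gen_cyclic ?\<phi>"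
      by (simp add: gen_cyclic_def)
  qed
  ultimately show ?thesis
    using cyclic_profile_in_profiles by blast
qed

end
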